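(* Let $E$ be a directed graph and let the graph inverse semigroup $G(E)$ carry a Hausdorff topology making it a topological semigroup. Then $G(E)$ embeds (as a subsemigroup and topological subspace) into a compact topological semigroup $S$ if and only if $G(E)$ is compact.
   Context: All spaces are Hausdorff. A directed graph $E=(E^0,E^1,r,s)$ has vertices $E^0$, edges $E^1$, and source/range maps $s,r:E^1\to E^0$; paths are vertices and sequences of edges $e_1\ldots e_n$ with $r(e_i)=s(e_{i+1})$. The graph inverse semigroup $G(E)$ is the semigroup with zero $0$ generated by $E^0$, $E^1$, $E^{-1}=\{e^{-1}\mid e\in E^1\}$ subject to: for $a,b\in E^0$, $e,f\in E^1$: $ab=a$ if $a=b$, else $0$; $s(e)e=er(e)=e$; $e^{-1}s(e)=r(e)e^{-1}=e^{-1}$; $e^{-1}f=r(e)$ if $e=f$, else $0$. Non-zero elements are uniquely $uv^{-1}$ with $u,v$ paths and $r(u)=r(v)$. *)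

theory Defs
  imports "HOL-Analysis.Analysis"
begin

text \<open>A path is represented as a pair (v, es): a start vertex v and a list of edges es.
The empty list represents the vertex v itself; otherwise v is the source of the
first edge and consecutive edges are composable.\<close>

type_synonym ('v,'e) path = "'v \<times> 'e list"

definition is_path :: "'v set \<Rightarrow> 'e set \<Rightarrow> ('e \<Rightarrow> 'v) \<Rightarrow> ('e \<Rightarrow> 'v) \<Rightarrow> ('v,'e) path \<Rightarrow> bool" where
  "is_path V Ed s r p \<longleftrightarrow>
     fst p \<in> V \<and> set (snd p) \<subseteq> Ed \<and>
     (snd p \<noteq> [] \<longrightarrow> s (hd (snd p)) = fst p) \<and>
     (\<forall>i. Suc i < length (snd p) \<longrightarrow> r (snd p ! i) = s (snd p ! Suc i))"

definition path_range :: "('e \<Rightarrow> 'v) \<Rightarrow> ('v,'e) path \<Rightarrow> 'v" where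
  "path_range r p = (if snd p = [] then fst p else r (last (snd p)))"

text \<open>Elements of the graph inverse semigroup: zero, or u v^{-1} (normal form).\<close>
datatype ('v,'e) gis = GZero | GElem "('v,'e) path" "('v,'e) path"

definition gis_carrier :: "'v set \<Rightarrow> 'e set \<Rightarrow> ('e \<Rightarrow> 'v) \<Rightarrow> ('e \<Rightarrow> 'v) \<Rightarrow> ('v,'e) gis set" where
  "gis_carrier V Ed s r =
     insert GZero {GElem u v | u v. is_path V Ed s r u \<and> is_path V Ed s r v \<and>
                                     path_range r u = path_range r v}"

text \<open>Multiplication in normal form:
  (u v^{-1})(w z^{-1}) = u t z^{-1} if w = v t;  u (z t)^{-1} if v = w t;  0 otherwise.\<close>
fun gis_mult :: "('v,'e) gis \<Rightarrow> ('v,'e) gis \<Rightarrow> ('v,'e) gis" where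
  "gis_mult (GElem u v) (GElem w z) =
     (if fst w = fst v \<and> (\<exists>t. snd w = snd v @ t)
      then GElem (fst u, snd u @ drop (length (snd v)) (snd w)) z
      else if fst v = fst w \<and> (\<exists>t. snd v = snd w @ t)
      then GElem u (fst z, snd z @ drop (length (snd w)) (snd v))
      else GZero)"
| "gis_mult _ _ = GZero"

definition top_semigroup :: "'b topology \<Rightarrow> ('b \<Rightarrow> 'b \<Rightarrow> 'b) \<Rightarrow> bool" where
  "top_semigroup \<sigma> m \<longleftrightarrow>
     Hausdorff_space \<sigma> \<and>
     (\<forall>x\<in>topspace \<sigma>. \<forall>y\<in>topspace \<sigma>. m x y \<in> topspace \<sigma>) \<and>
     (\<forall>x\<in>topspace \<sigma>. \<forall>y\<in>topspace \<sigma>. \<forall>z\<in>topspace \<sigma>. m (m x y) z = m x (m y z)) \<and>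
     continuous_map (prod_topology \<sigma> \<sigma>) \<sigma> (\<lambda>(x,y). m x y)"

definition embeds_in_compact_top_semigroup ::
  "'a topology \<Rightarrow> ('a \<Rightarrow> 'a \<Rightarrow> 'a) \<Rightarrow> 'b topology \<Rightarrow> ('b \<Rightarrow> 'b \<Rightarrow> 'b) \<Rightarrow> ('a \<Rightarrow> 'b) \<Rightarrow> bool" where
  "embeds_in_compact_top_semigroup \<tau> mul \<sigma> m h \<longleftrightarrow>
     top_semigroup \<sigma> m \<and> compact_space \<sigma> \<and>
     embedding_map \<tau> \<sigma> h \<and>
     (\<forall>x\<in>topspace \<tau>. \<forall>y\<in>topspace \<tau>. h (mul x y) = m (h x) (h y))"

end

theory Submission
  imports Defs
begin

(* If G(E) is compact, the identity map is the required embedding. Conversely, let h embed G(E)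
   into a compact semigroup S. A compact semigroup contains no bicyclic monoid, so E has no
   cycles: a cycle c at w would give c^-1 c = w but c c^-1 <> w. Moreover h 0 is a zero on the
   closure of the image. Suppose p lies in that closure but not in the image; then p <> h 0.
   Factorising u v^-1 through pairwise orthogonal idempotents, as (u r^-1) r (r v^-1) with
   r = r(u), as (u u^-1)^2 (u v^-1), or as (u v^-1)(v v^-1)^2 (for paths of common range the
   idempotents u u^-1 are orthogonal because E is acyclic), and using that an accumulation point
   of orthogonal idempotents in a compact semigroup must be the zero, one pins down in turn
   the range r(u), the path u and the path v of the elements approaching p. So p is the image of
   a single element, a contradiction. Hence the image is closed, thus compact. *)

section \<open>Compact topological semigroups\<close>

lemma top_semigroupD:
  assumes "top_semigroup \<sigma> m"
  shows top_semigroup_Hausdorff: "Hausdorff_space \<sigma>"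
    and top_semigroup_closed: "\<And>x y. x \<in> topspace \<sigma> \<Longrightarrow> y \<in> topspace \<sigma> \<Longrightarrow> m x y \<in> topspace \<sigma>"
    and top_semigroup_assoc:
      "\<And>x y z. x \<in> topspace \<sigma> \<Longrightarrow> y \<in> topspace \<sigma> \<Longrightarrow> z \<in> topspace \<sigma> \<Longrightarrow> m (m x y) z = m x (m y z)"
    and top_semigroup_continuous: "continuous_map (prod_topology \<sigma> \<sigma>) \<sigma> (\<lambda>(x, y). m x y)"
  using assms by (auto simp: top_semigroup_def)

lemma continuous_map_top_semigroup_mult:
  assumes "top_semigroup \<sigma> m" "continuous_map X \<sigma> f" "continuous_map X \<sigma> g"
  shows "continuous_map X \<sigma> (\<lambda>x. m (f x) (g x))"
  using continuous_map_compose[OF continuous_map_pairedI[OF assms(2,3)]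
      top_semigroup_continuous[OF assms(1)]]
  by (simp add: o_def)

lemma continuous_map_top_semigroup_left:
  "top_semigroup \<sigma> m \<Longrightarrow> t \<in> topspace \<sigma> \<Longrightarrow> continuous_map \<sigma> \<sigma> (m t)"
  using continuous_map_top_semigroup_mult[of \<sigma> m \<sigma> "\<lambda>_. t" "\<lambda>x. x"] by simp

lemma continuous_map_top_semigroup_right:
  "top_semigroup \<sigma> m \<Longrightarrow> t \<in> topspace \<sigma> \<Longrightarrow> continuous_map \<sigma> \<sigma> (\<lambda>x. m x t)"
  using continuous_map_top_semigroup_mult[of \<sigma> m \<sigma> "\<lambda>x. x" "\<lambda>_. t"] by simp

lemma top_semigroup_mult_nhds:
  assumes ts: "top_semigroup \<sigma> m" and W: "openin \<sigma> W" "m p p \<in> W" and p: "p \<in> topspace \<sigma>"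
  obtains U where "openin \<sigma> U" "p \<in> U" "\<And>x y. x \<in> U \<Longrightarrow> y \<in> U \<Longrightarrow> m x y \<in> W"
proof -
  let ?N = "{q \<in> topspace (prod_topology \<sigma> \<sigma>). (\<lambda>(x, y). m x y) q \<in> W}"
  have N: "openin (prod_topology \<sigma> \<sigma>) ?N"
    using top_semigroup_continuous[OF ts] W(1) by (simp add: continuous_map_def)
  have pN: "(p, p) \<in> ?N"
    using p W by simp
  obtain U1 U2 where U: "openin \<sigma> U1" "openin \<sigma> U2" "p \<in> U1" "p \<in> U2" "U1 \<times> U2 \<subseteq> ?N"
    using openin_prod_topology_alt[THEN iffD1, OF N, rule_format, OF pN] by blast
  show thesis
  proof (rule that[of "U1 \<inter> U2"])
    fix x y assume "x \<in> U1 \<inter> U2" "y \<in> U1 \<inter> U2"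
    then have "(x, y) \<in> ?N"
      using U(5) by blast
    then show "m x y \<in> W"
      by simp
  qed (use U in auto)
qed

lemma top_semigroup_square_separation:
  assumes ts: "top_semigroup \<sigma> m" and p: "p \<in> topspace \<sigma>" and q: "q \<in> topspace \<sigma>" "m p p \<noteq> q"
  obtains U V where "openin \<sigma> U" "p \<in> U" "openin \<sigma> V" "q \<in> V" "\<And>x y. x \<in> U \<Longrightarrow> y \<in> U \<Longrightarrow> m x y \<notin> V"
proof -
  obtain W V where W: "openin \<sigma> W" "openin \<sigma> V" "m p p \<in> W" "q \<in> V" "disjnt W V"
    using top_semigroup_Hausdorff[OF ts] top_semigroup_closed[OF ts p p] q
    unfolding Hausdorff_space_def by metis
  obtain U where "openin \<sigma> U" "p \<in> U" "\<And>x y. x \<in> U \<Longrightarrow> y \<in> U \<Longrightarrow> m x y \<in> W"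
    using top_semigroup_mult_nhds[OF ts W(1,3) p] by blast
  then show thesis
    using W that by (metis disjnt_iff)
qed

lemma top_semigroup_mult_closure_of:
  assumes ts: "top_semigroup \<sigma> m" and S: "\<And>x y. x \<in> S \<Longrightarrow> y \<in> S \<Longrightarrow> m x y \<in> S"
    and "x \<in> \<sigma> closure_of S" "y \<in> \<sigma> closure_of S"
  shows "m x y \<in> \<sigma> closure_of S"
proof -
  have "(x, y) \<in> prod_topology \<sigma> \<sigma> closure_of (S \<times> S)"
    using assms(3,4) by (simp add: closure_of_Times)
  then have "m x y \<in> \<sigma> closure_of ((\<lambda>(x, y). m x y) ` (S \<times> S))"
    using continuous_map_image_closure_subset[OF top_semigroup_continuous[OF ts]] by blast
  moreover have "(\<lambda>(x, y). m x y) ` (S \<times> S) \<subseteq> S"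
    using S by auto
  ultimately show ?thesis
    by (meson closure_of_mono subsetD)
qed

definition pair_mult :: "('a \<Rightarrow> 'a \<Rightarrow> 'a) \<Rightarrow> 'a \<times> 'a \<Rightarrow> 'a \<times> 'a \<Rightarrow> 'a \<times> 'a" where
  "pair_mult m x y = (m (fst x) (fst y), m (snd x) (snd y))"

lemma top_semigroup_pair_mult:
  assumes ts: "top_semigroup \<sigma> m"
  shows "top_semigroup (prod_topology \<sigma> \<sigma>) (pair_mult m)"
proof -
  let ?P = "prod_topology (prod_topology \<sigma> \<sigma>) (prod_topology \<sigma> \<sigma>)"
  have "continuous_map ?P \<sigma> (\<lambda>q. m (f (fst q)) (f (snd q)))"
    if "continuous_map (prod_topology \<sigma> \<sigma>) \<sigma> f" for f
    using continuous_map_top_semigroup_mult[OF ts continuous_map_compose[OF continuous_map_fst that]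
        continuous_map_compose[OF continuous_map_snd that]]
    by (simp add: o_def)
  from this[OF continuous_map_fst] this[OF continuous_map_snd]
  have "continuous_map ?P (prod_topology \<sigma> \<sigma>) (\<lambda>(x, y). pair_mult m x y)"
    unfolding pair_mult_def case_prod_beta by (intro continuous_map_pairedI)
  moreover have "Hausdorff_space (prod_topology \<sigma> \<sigma>)"
    using top_semigroup_Hausdorff[OF ts] by (simp add: Hausdorff_space_prod_topology)
  moreover have "pair_mult m x y \<in> topspace (prod_topology \<sigma> \<sigma>)"
    if "x \<in> topspace (prod_topology \<sigma> \<sigma>)" "y \<in> topspace (prod_topology \<sigma> \<sigma>)" for x y
    using that top_semigroup_closed[OF ts] by (auto simp: pair_mult_def)
  moreover have "pair_mult m (pair_mult m x y) z = pair_mult m x (pair_mult m y z)"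
    if "x \<in> topspace (prod_topology \<sigma> \<sigma>)" "y \<in> topspace (prod_topology \<sigma> \<sigma>)"
      "z \<in> topspace (prod_topology \<sigma> \<sigma>)" for x y z
    using that top_semigroup_assoc[OF ts] by (auto simp: pair_mult_def)
  ultimately show ?thesis
    unfolding top_semigroup_def by blast
qed

lemma compact_space_directed_Inter_nonempty:
  assumes cs: "compact_space X" and I: "I \<noteq> {}"
    and closed: "\<And>i. i \<in> I \<Longrightarrow> closedin X (C i)" and nonempty: "\<And>i. i \<in> I \<Longrightarrow> C i \<noteq> {}"
    and directed: "\<And>i j. i \<in> I \<Longrightarrow> j \<in> I \<Longrightarrow> \<exists>k\<in>I. C k \<subseteq> C i \<inter> C j"
  shows "(\<Inter>i\<in>I. C i) \<noteq> {}"
proof -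
  have lower_bound: "\<exists>k\<in>I. C k \<subseteq> \<Inter>(C ` J)" if "finite J" "J \<noteq> {}" "J \<subseteq> I" for J
    using that
  proof (induction J rule: finite_ne_induct)
    case (insert j J)
    then obtain k where "k \<in> I" "C k \<subseteq> \<Inter>(C ` J)"
      by blast
    moreover obtain k' where "k' \<in> I" "C k' \<subseteq> C j \<inter> C k"
      using directed[of j k] insert.prems \<open>k \<in> I\<close> by blast
    ultimately show ?case
      by blast
  qed blast
  show ?thesis
  proof (rule compact_space_fip[THEN iffD1, OF cs, rule_format], intro conjI allI impI)
    fix \<F> assume "finite \<F> \<and> \<F> \<subseteq> C ` I"
    then obtain J where J: "J \<subseteq> I" "finite J" "\<F> = C ` J"
      by (meson finite_subset_image)
    show "\<Inter>\<F> \<noteq> {}"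
    proof (cases "J = {}")
      case False
      then obtain k where "k \<in> I" "C k \<subseteq> \<Inter>\<F>"
        using lower_bound J by blast
      then show ?thesis
        using nonempty by blast
    qed (use J in simp)
  qed (use closed in auto)
qed

definition closed_subsemigroup :: "'a topology \<Rightarrow> ('a \<Rightarrow> 'a \<Rightarrow> 'a) \<Rightarrow> 'a set \<Rightarrow> bool" where
  "closed_subsemigroup \<sigma> m A \<longleftrightarrow> closedin \<sigma> A \<and> (\<forall>x\<in>A. \<forall>y\<in>A. m x y \<in> A)"

definition minimal_closed_subsemigroup :: "'a topology \<Rightarrow> ('a \<Rightarrow> 'a \<Rightarrow> 'a) \<Rightarrow> 'a set \<Rightarrow> bool" where
  "minimal_closed_subsemigroup \<sigma> m A \<longleftrightarrow> A \<noteq> {} \<and> closed_subsemigroup \<sigma> m A \<and>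
     (\<forall>B. B \<subseteq> A \<and> B \<noteq> {} \<and> closed_subsemigroup \<sigma> m B \<longrightarrow> B = A)"

lemma closed_subsemigroup_Inter_chain:
  assumes cs: "compact_space \<sigma>" and "\<C> \<noteq> {}"
    and \<C>: "\<And>A. A \<in> \<C> \<Longrightarrow> A \<noteq> {} \<and> closed_subsemigroup \<sigma> m A"
    and chain: "\<And>A B. A \<in> \<C> \<Longrightarrow> B \<in> \<C> \<Longrightarrow> A \<subseteq> B \<or> B \<subseteq> A"
  shows "\<Inter>\<C> \<noteq> {} \<and> closed_subsemigroup \<sigma> m (\<Inter>\<C>)"
proof
  show "\<Inter>\<C> \<noteq> {}"
    using compact_space_directed_Inter_nonempty[OF cs \<open>\<C> \<noteq> {}\<close>, of "\<lambda>A. A"] \<C> chain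
    by (simp add: closed_subsemigroup_def) (metis Int_absorb1 Int_absorb2 order_refl)
  show "closed_subsemigroup \<sigma> m (\<Inter>\<C>)"
    using \<C> \<open>\<C> \<noteq> {}\<close> by (auto simp: closed_subsemigroup_def intro!: closedin_Inter)
qed

lemma minimal_closed_subsemigroup_exists:
  assumes cs: "compact_space \<sigma>" and L: "closed_subsemigroup \<sigma> m L" "L \<noteq> {}"
  obtains A where "A \<subseteq> L" "minimal_closed_subsemigroup \<sigma> m A"
proof -
  define Fam where "Fam = {A. A \<subseteq> L \<and> A \<noteq> {} \<and> closed_subsemigroup \<sigma> m A}"
  have "\<exists>A\<in>Fam. \<forall>B\<in>Fam. B \<subseteq> A \<longrightarrow> B = A"
  proof (rule predicate_Zorn)
    show "partial_order_on Fam (relation_of (\<lambda>A B. B \<subseteq> A) Fam)"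
      by (rule partial_order_on_relation_ofI) auto
  next
    fix \<C> assume "\<C> \<in> Chains (relation_of (\<lambda>A B. B \<subseteq> A) Fam)"
    then have sub: "\<C> \<subseteq> Fam" and chain: "\<And>A B. A \<in> \<C> \<Longrightarrow> B \<in> \<C> \<Longrightarrow> A \<subseteq> B \<or> B \<subseteq> A"
      by (auto simp: Chains_def relation_of_def)
    show "\<exists>B\<in>Fam. \<forall>A\<in>\<C>. B \<subseteq> A"
    proof (cases "\<C> = {}")
      case False
      then have "\<Inter>\<C> \<noteq> {} \<and> closed_subsemigroup \<sigma> m (\<Inter>\<C>)"
        using closed_subsemigroup_Inter_chain[OF cs False] sub chain by (auto simp: Fam_def)
      moreover have "\<Inter>\<C> \<subseteq> L"
        using False sub by (auto simp: Fam_def)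
      ultimately show ?thesis
        by (auto simp: Fam_def)
    qed (use L in \<open>auto simp: Fam_def\<close>)
  qed
  then obtain A where A: "A \<in> Fam" and minimal: "\<And>B. B \<in> Fam \<Longrightarrow> B \<subseteq> A \<Longrightarrow> B = A"
    by blast
  show thesis
  proof (rule that)
    show "minimal_closed_subsemigroup \<sigma> m A"
      unfolding minimal_closed_subsemigroup_def
    proof (intro conjI allI impI)
      fix B assume "B \<subseteq> A \<and> B \<noteq> {} \<and> closed_subsemigroup \<sigma> m B"
      with A show "B = A"
        by (intro minimal) (auto simp: Fam_def)
    qed (use A in \<open>auto simp: Fam_def\<close>)
  qed (use A in \<open>auto simp: Fam_def\<close>)
qed

lemma minimal_closed_subsemigroup_mult_image:
  assumes ts: "top_semigroup \<sigma> m" and cs: "compact_space \<sigma>"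
    and A: "minimal_closed_subsemigroup \<sigma> m A" and t: "t \<in> A"
  shows "m t ` A = A"
proof -
  have A_top: "A \<subseteq> topspace \<sigma>" and A_mult: "\<And>x y. x \<in> A \<Longrightarrow> y \<in> A \<Longrightarrow> m x y \<in> A"
    using A closedin_subset by (auto simp: minimal_closed_subsemigroup_def closed_subsemigroup_def)
  have "closedin \<sigma> (m t ` A)"
    using continuous_imp_closed_map[OF continuous_map_top_semigroup_left[OF ts] cs
        top_semigroup_Hausdorff[OF ts]]
      A t A_top by (auto simp: closed_map_def minimal_closed_subsemigroup_def closed_subsemigroup_def)
  moreover have "m x y \<in> m t ` A" if xy: "x \<in> m t ` A" "y \<in> m t ` A" for x y
  proof -
    obtain a b where "a \<in> A" "b \<in> A" "x = m t a" "y = m t b"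
      using xy by blast
    then have "m x y = m t (m a (m t b))"
      using top_semigroup_assoc[OF ts] A_top A_mult t by (simp add: subset_iff)
    then show ?thesis
      using A_mult \<open>a \<in> A\<close> \<open>b \<in> A\<close> t by blast
  qed
  moreover have "m t ` A \<subseteq> A" "m t ` A \<noteq> {}"
    using A_mult t by auto
  ultimately show ?thesis
    using A by (auto simp: minimal_closed_subsemigroup_def closed_subsemigroup_def)
qed

lemma minimal_closed_subsemigroup_idempotent:
  assumes ts: "top_semigroup \<sigma> m" and cs: "compact_space \<sigma>"
    and A: "minimal_closed_subsemigroup \<sigma> m A" and t: "t \<in> A"
  shows "m t t = t"
proof -
  have A_top: "A \<subseteq> topspace \<sigma>" and A_mult: "\<And>x y. x \<in> A \<Longrightarrow> y \<in> A \<Longrightarrow> m x y \<in> A"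
    using A closedin_subset by (auto simp: minimal_closed_subsemigroup_def closed_subsemigroup_def)
  define S where "S = {x \<in> A. m t x = t}"
  have "S = A \<inter> {x \<in> topspace \<sigma>. m t x \<in> {t}}"
    using A_top by (auto simp: S_def)
  moreover have "closedin \<sigma> {x \<in> topspace \<sigma>. m t x \<in> {t}}"
    using t A_top by (intro closedin_continuous_map_preimage[OF continuous_map_top_semigroup_left[OF ts]
        closedin_Hausdorff_singleton[OF top_semigroup_Hausdorff[OF ts]]]) auto
  ultimately have "closedin \<sigma> S"
    using A by (auto simp: minimal_closed_subsemigroup_def closed_subsemigroup_def)
  moreover have "m x y \<in> S" if "x \<in> S" "y \<in> S" for x y
    using that top_semigroup_assoc[OF ts, of t x y] A_mult t A_top by (auto simp: S_def subset_iff)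
  moreover have "S \<noteq> {}"
    using minimal_closed_subsemigroup_mult_image[OF ts cs A t] t unfolding S_def by force
  ultimately have "S = A"
    using A by (auto simp: minimal_closed_subsemigroup_def closed_subsemigroup_def S_def)
  then show ?thesis
    using t by (auto simp: S_def)
qed

lemma closed_subsemigroup_has_idempotent:
  assumes ts: "top_semigroup \<sigma> m" and cs: "compact_space \<sigma>"
    and L: "closed_subsemigroup \<sigma> m L" "L \<noteq> {}"
  shows "\<exists>g\<in>L. m g g = g"
proof -
  obtain A where "A \<subseteq> L" "minimal_closed_subsemigroup \<sigma> m A"
    using minimal_closed_subsemigroup_exists[OF cs L] by blast
  moreover obtain t where "t \<in> A"
    using \<open>minimal_closed_subsemigroup \<sigma> m A\<close> by (auto simp: minimal_closed_subsemigroup_def)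
  ultimately show ?thesis
    using minimal_closed_subsemigroup_idempotent[OF ts cs] by blast
qed

text \<open>\<open>sg_power m x n\<close> is the \<open>(n+1)\<close>-st power of \<open>x\<close>: a semigroup need not have a unit.\<close>

primrec sg_power :: "('a \<Rightarrow> 'a \<Rightarrow> 'a) \<Rightarrow> 'a \<Rightarrow> nat \<Rightarrow> 'a" where
  "sg_power m x 0 = x"
| "sg_power m x (Suc n) = m (sg_power m x n) x"

lemma sg_power_in_topspace:
  "top_semigroup \<sigma> m \<Longrightarrow> x \<in> topspace \<sigma> \<Longrightarrow> sg_power m x n \<in> topspace \<sigma>"
  by (induction n) (simp_all add: top_semigroup_closed)

lemma sg_power_mult:
  assumes ts: "top_semigroup \<sigma> m" and x: "x \<in> topspace \<sigma>"
  shows "m (sg_power m x n) (sg_power m x k) = sg_power m x (Suc (n + k))"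
proof (induction k)
  case (Suc k)
  have "m (sg_power m x n) (sg_power m x (Suc k)) = m (m (sg_power m x n) (sg_power m x k)) x"
    using top_semigroup_assoc[OF ts sg_power_in_topspace[OF ts x] sg_power_in_topspace[OF ts x] x]
    by simp
  then show ?case
    using Suc by simp
qed simp

lemma sg_power_pair_mult:
  "sg_power (pair_mult m) (a, b) n = (sg_power m a n, sg_power m b n)"
  by (induction n) (simp_all add: pair_mult_def)

lemma sg_power_tail_mult_closed:
  assumes ts: "top_semigroup \<sigma> m" and x: "x \<in> topspace \<sigma>"
    and "y \<in> sg_power m x ` {N..}" "z \<in> sg_power m x ` {N..}"
  shows "m y z \<in> sg_power m x ` {N..}"
proof -
  obtain n k where "n \<in> {N..}" "y = sg_power m x n" "z = sg_power m x k"
    using assms(3,4) by blast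
  then have "m y z = sg_power m x (Suc (n + k))" "Suc (n + k) \<in> {N..}"
    using sg_power_mult[OF ts x, of n k] by simp_all
  then show ?thesis
    by (rule image_eqI)
qed

lemma power_cluster_idempotent:
  assumes ts: "top_semigroup \<sigma> m" and cs: "compact_space \<sigma>" and x: "x \<in> topspace \<sigma>"
  obtains g where "m g g = g" "\<And>N. g \<in> \<sigma> closure_of (sg_power m x ` {N..})"
proof -
  define Cl where "Cl N = \<sigma> closure_of (sg_power m x ` {N..})" for N
  have nonempty: "(\<Inter>N. Cl N) \<noteq> {}"
  proof (rule compact_space_imp_nest[OF cs])
    show "Cl N \<noteq> {}" for N
      using closure_of_subset[of "sg_power m x ` {N..}" \<sigma>] sg_power_in_topspace[OF ts x]
      by (auto simp: Cl_def)
    show "decseq Cl"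
      by (auto simp: decseq_def Cl_def intro!: closure_of_mono)
  qed (simp add: Cl_def)
  have "m y z \<in> Cl N" if "y \<in> Cl N" "z \<in> Cl N" for y z N
    using top_semigroup_mult_closure_of[OF ts sg_power_tail_mult_closed[OF ts x] that[unfolded Cl_def]]
    by (simp add: Cl_def)
  then have closed: "closed_subsemigroup \<sigma> m (\<Inter>N. Cl N)"
    by (auto simp: closed_subsemigroup_def Cl_def)
  obtain g where "g \<in> (\<Inter>N. Cl N)" "m g g = g"
    using closed_subsemigroup_has_idempotent[OF ts cs closed nonempty] ..
  then show thesis
    by (intro that) (auto simp: Cl_def)
qed

lemma bicyclic_powers:
  assumes ts: "top_semigroup \<sigma> m" and a: "a \<in> topspace \<sigma>" and b: "b \<in> topspace \<sigma>"
    and e: "e \<in> topspace \<sigma>" and eb: "m e b = b" and ab: "m a b = e"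
  shows bicyclic_powers_unit: "m e (sg_power m b n) = sg_power m b n"
    and bicyclic_powers_mult: "m (sg_power m a n) (sg_power m b n) = e"
proof -
  note assoc = top_semigroup_assoc[OF ts]
  have b_top: "sg_power m b n \<in> topspace \<sigma>" for n
    using sg_power_in_topspace[OF ts b] .
  show e_pb: "m e (sg_power m b n) = sg_power m b n" for n
  proof (induction n)
    case (Suc n)
    then show ?case
      using assoc[OF e b_top b, symmetric] by simp
  qed (simp add: eb)
  show "m (sg_power m a n) (sg_power m b n) = e"
  proof (induction n)
    case (Suc n)
    have "m (sg_power m a (Suc n)) (sg_power m b (Suc n))
        = m (m (sg_power m a n) a) (m b (sg_power m b n))"
      using sg_power_mult[OF ts b, of 0 n] by simp
    also have "\<dots> = m (sg_power m a n) (m (m a b) (sg_power m b n))"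
      using a b b_top sg_power_in_topspace[OF ts a] by (simp add: assoc top_semigroup_closed[OF ts])
    also have "\<dots> = e"
      using Suc by (simp add: ab e_pb)
    finally show ?case .
  qed (simp add: ab)
qed

text \<open>The idempotent obtained from the powers of \<open>(a, b)\<close> in \<open>S \<times> S\<close> shows that \<open>e\<close> is a
  cluster point of the powers of \<open>b\<close>.\<close>

lemma bicyclic_unit_in_power_closure:
  assumes ts: "top_semigroup \<sigma> m" and cs: "compact_space \<sigma>"
    and a: "a \<in> topspace \<sigma>" and b: "b \<in> topspace \<sigma>" and e: "e \<in> topspace \<sigma>"
    and eb: "m e b = b" and ab: "m a b = e"
  shows "e \<in> \<sigma> closure_of (sg_power m b ` {1..})"
proof -
  note H = top_semigroup_Hausdorff[OF ts] and powers = bicyclic_powers[OF ts a b e eb ab]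
  have cs2: "compact_space (prod_topology \<sigma> \<sigma>)"
    using cs by (simp add: compact_space_prod_topology)
  have ab_top: "(a, b) \<in> topspace (prod_topology \<sigma> \<sigma>)"
    using a b by simp
  obtain q where q_idem: "pair_mult m q q = q"
    and q_cl: "\<And>N. q \<in> prod_topology \<sigma> \<sigma> closure_of (sg_power (pair_mult m) (a, b) ` {N..})"
    using power_cluster_idempotent[OF top_semigroup_pair_mult[OF ts] cs2 ab_top] by blast
  obtain f g where q: "q = (f, g)"
    by (cases q)
  have fg_cl: "(f, g) \<in> prod_topology \<sigma> \<sigma> closure_of
      ((\<lambda>n. (sg_power m a n, sg_power m b n)) ` {N..})" for N
    using q_cl[of N] by (simp add: q sg_power_pair_mult)
  have "m f g \<in> \<sigma> closure_of ((\<lambda>(x, y). m x y) ` (\<lambda>n. (sg_power m a n, sg_power m b n)) ` {0..})"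
    using continuous_map_image_closure_subset[OF top_semigroup_continuous[OF ts]] fg_cl[of 0]
    by fastforce
  then have fg: "m f g = e"
    using powers(2) closure_of_singleton[OF Hausdorff_imp_t1_space[OF H]] e by (simp add: image_image)
  have g_cl: "g \<in> \<sigma> closure_of (sg_power m b ` {N..})" for N
    using continuous_map_image_closure_subset[OF continuous_map_snd, of \<sigma> \<sigma>] fg_cl[of N]
    by (fastforce simp: image_image)
  have "m e g = g"
    by (rule forall_in_closure_of_eq[OF g_cl[of 0] H continuous_map_top_semigroup_left[OF ts e]])
      (auto simp: powers(1))
  moreover have "f \<in> topspace \<sigma>" "g \<in> topspace \<sigma>"
    using fg_cl[of 0] by (auto simp: in_closure_of)
  ultimately have "g = e"
    using fg q_idem top_semigroup_assoc[OF ts, of f g g] by (simp add: q pair_mult_def)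
  then show ?thesis
    using g_cl[of 1] by simp
qed

lemma compact_top_semigroup_no_bicyclic:
  assumes ts: "top_semigroup \<sigma> m" and cs: "compact_space \<sigma>"
    and a: "a \<in> topspace \<sigma>" and b: "b \<in> topspace \<sigma>" and e: "e \<in> topspace \<sigma>"
    and ae: "m a e = a" and eb: "m e b = b" and ab: "m a b = e"
  shows "m b a = e"
proof -
  note H = top_semigroup_Hausdorff[OF ts]
  let ?B = "\<sigma> closure_of (sg_power m b ` {0..})"
  have closed: "closedin \<sigma> (m b ` ?B)"
    using continuous_imp_closed_map[OF continuous_map_top_semigroup_left[OF ts b] cs H]
    by (simp add: closed_map_def)
  have "sg_power m b ` {1..} \<subseteq> m b ` ?B"
  proof (rule image_subsetI)
    fix n :: nat assume "n \<in> {1..}"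
    then have "sg_power m b n = m b (sg_power m b (n - 1))"
      using sg_power_mult[OF ts b, of 0 "n - 1"] by simp
    moreover have "sg_power m b (n - 1) \<in> ?B"
      using sg_power_in_topspace[OF ts b] by (intro closure_of_subset[THEN subsetD]) auto
    ultimately show "sg_power m b n \<in> m b ` ?B"
      by blast
  qed
  then have "e \<in> m b ` ?B"
    using closure_of_minimal[OF _ closed] bicyclic_unit_in_power_closure[OF ts cs a b e eb ab] by blast
  then obtain k where k: "k \<in> ?B" and bk: "m b k = e"
    by (metis imageE)
  have "m e k = k"
    by (rule forall_in_closure_of_eq[OF k H continuous_map_top_semigroup_left[OF ts e]])
      (auto simp: bicyclic_powers_unit[OF ts a b e eb ab])
  moreover have "k \<in> topspace \<sigma>"
    using closure_of_subset_topspace k by fast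
  ultimately have "a = k"
    using ae bk ab top_semigroup_assoc[OF ts a b] by metis
  then show ?thesis
    using bk by simp
qed

lemma limit_of_orthogonal_idempotents:
  assumes ts: "top_semigroup \<sigma> m" and z: "z \<in> topspace \<sigma>"
    and idem: "\<And>j. j \<in> J \<Longrightarrow> m (\<iota> j) (\<iota> j) = \<iota> j"
    and orth: "\<And>i j. i \<in> J \<Longrightarrow> j \<in> J \<Longrightarrow> i \<noteq> j \<Longrightarrow> m (\<iota> i) (\<iota> j) = z"
    and acc: "\<And>\<Phi>. finite \<Phi> \<Longrightarrow> p \<in> \<sigma> closure_of (\<iota> ` (J - \<Phi>))"
  shows "p = z"
proof -
  have p: "p \<in> topspace \<sigma>"
    using acc[of "{}"] closure_of_subset_topspace by fast
  have meet: "\<exists>j \<in> J - \<Phi>. \<iota> j \<in> U" if "openin \<sigma> U" "p \<in> U" "finite \<Phi>" for U \<Phi>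
    using acc[OF that(3)] that(1,2) unfolding in_closure_of by blast
  have "m p p = p"
  proof (rule ccontr)
    assume "m p p \<noteq> p"
    then obtain U V where UV: "openin \<sigma> U" "p \<in> U" "openin \<sigma> V" "p \<in> V"
      "\<And>x y. x \<in> U \<Longrightarrow> y \<in> U \<Longrightarrow> m x y \<notin> V"
      using top_semigroup_square_separation[OF ts p p] by blast
    then obtain j where "j \<in> J" "\<iota> j \<in> U \<inter> V"
      using meet[of "U \<inter> V" "{}"] by blast
    then show False
      using UV(5) idem by fastforce
  qed
  moreover have "m p p = z"
  proof (rule ccontr)
    assume "m p p \<noteq> z"
    then obtain U V where UV: "openin \<sigma> U" "p \<in> U" "openin \<sigma> V" "z \<in> V"
      "\<And>x y. x \<in> U \<Longrightarrow> y \<in> U \<Longrightarrow> m x y \<notin> V"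
      using top_semigroup_square_separation[OF ts p z] by blast
    obtain i where i: "i \<in> J" "\<iota> i \<in> U"
      using meet[of U "{}"] UV by blast
    obtain j where j: "j \<in> J - {i}" "\<iota> j \<in> U"
      using meet[of U "{i}"] UV by blast
    show False
      using UV(4) UV(5)[OF i(2) j(2)] orth[OF i(1)] j(1) by auto
  qed
  ultimately show ?thesis
    by simp
qed

lemma closure_point_lift_to_compact:
  fixes T :: "'i set \<Rightarrow> 'y set"
  assumes csY: "compact_space Y" and H: "Hausdorff_space X" and \<phi>: "continuous_map Y X \<phi>"
    and T: "\<And>\<Phi>. T \<Phi> \<subseteq> topspace Y" and anti: "\<And>\<Phi> \<Psi>. \<Phi> \<subseteq> \<Psi> \<Longrightarrow> T \<Psi> \<subseteq> T \<Phi>"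
    and s: "\<And>\<Phi>. finite \<Phi> \<Longrightarrow> s \<in> X closure_of (\<phi> ` T \<Phi>)"
  shows "\<exists>y. \<phi> y = s \<and> (\<forall>\<Phi>. finite \<Phi> \<longrightarrow> y \<in> Y closure_of (T \<Phi>))"
proof -
  define D where "D \<Phi> = Y closure_of (T \<Phi>) \<inter> {y \<in> topspace Y. \<phi> y \<in> {s}}" for \<Phi>
  have s_top: "s \<in> topspace X"
    using s[of "{}"] closure_of_subset_topspace by fast
  have "(\<Inter>\<Phi>\<in>{\<Phi> :: 'i set. finite \<Phi>}. D \<Phi>) \<noteq> {}"
  proof (rule compact_space_directed_Inter_nonempty[OF csY])
    fix \<Phi> :: "'i set" assume "\<Phi> \<in> {\<Phi>. finite \<Phi>}"
    moreover have "closedin X (\<phi> ` (Y closure_of (T \<Phi>)))"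
      using continuous_imp_closed_map[OF \<phi> csY H] by (simp add: closed_map_def)
    moreover have "\<phi> ` T \<Phi> \<subseteq> \<phi> ` (Y closure_of (T \<Phi>))"
      using closure_of_subset[OF T] by blast
    ultimately have "s \<in> \<phi> ` (Y closure_of (T \<Phi>))"
      using s closure_of_minimal by blast
    then show "D \<Phi> \<noteq> {}"
      using closure_of_subset_topspace by (fastforce simp: D_def)
    show "closedin Y (D \<Phi>)"
      unfolding D_def
      by (intro closedin_Int closedin_closure_of
          closedin_continuous_map_preimage[OF \<phi> closedin_Hausdorff_singleton[OF H s_top]])
  next
    fix \<Phi> \<Psi> :: "'i set" assume "\<Phi> \<in> {\<Phi>. finite \<Phi>}" "\<Psi> \<in> {\<Phi>. finite \<Phi>}"
    moreover have "D (\<Phi> \<union> \<Psi>) \<subseteq> D \<Phi> \<inter> D \<Psi>"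
      unfolding D_def using closure_of_mono[OF anti] by blast
    ultimately show "\<exists>\<Theta>\<in>{\<Phi>. finite \<Phi>}. D \<Theta> \<subseteq> D \<Phi> \<inter> D \<Psi>"
      by blast
  qed blast
  then show ?thesis
    unfolding D_def by blast
qed

lemma triple_product_cluster_point:
  fixes \<alpha> \<gamma> \<beta> :: "'x \<Rightarrow> 'a" and i :: "'x \<Rightarrow> 'i"
  assumes ts: "top_semigroup \<sigma> m" and cs: "compact_space \<sigma>"
    and factors: "\<And>x. x \<in> A \<Longrightarrow> \<alpha> x \<in> topspace \<sigma> \<and> \<gamma> x \<in> topspace \<sigma> \<and> \<beta> x \<in> topspace \<sigma>"
    and s: "\<And>\<Phi>. finite \<Phi> \<Longrightarrow> s \<in> \<sigma> closure_of ((\<lambda>x. m (m (\<alpha> x) (\<gamma> x)) (\<beta> x)) ` {x \<in> A. i x \<notin> \<Phi>})"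
  obtains a c b where "s = m (m a c) b" "a \<in> \<sigma> closure_of (\<alpha> ` A)" "b \<in> \<sigma> closure_of (\<beta> ` A)"
    "\<And>\<Phi>. finite \<Phi> \<Longrightarrow> c \<in> \<sigma> closure_of (\<gamma> ` {x \<in> A. i x \<notin> \<Phi>})"
proof -
  define Y where "Y = prod_topology \<sigma> (prod_topology \<sigma> \<sigma>)"
  define \<phi> where "\<phi> y = m (m (fst y) (fst (snd y))) (snd (snd y))" for y
  define T where "T \<Phi> = (\<lambda>x. (\<alpha> x, \<gamma> x, \<beta> x)) ` {x \<in> A. i x \<notin> \<Phi>}" for \<Phi>
  have cont_fst: "continuous_map Y \<sigma> fst"
    and cont_mid: "continuous_map Y \<sigma> (fst \<circ> snd)" and cont_last: "continuous_map Y \<sigma> (snd \<circ> snd)"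
    unfolding Y_def by (auto intro: continuous_map_compose continuous_map_fst continuous_map_snd)
  have cont_\<phi>: "continuous_map Y \<sigma> \<phi>"
    unfolding \<phi>_def using cont_fst cont_mid cont_last
    by (intro continuous_map_top_semigroup_mult[OF ts]) (simp_all add: o_def)
  have csY: "compact_space Y"
    using cs by (simp add: Y_def compact_space_prod_topology)
  have T_top: "T \<Phi> \<subseteq> topspace Y" for \<Phi>
    using factors by (auto simp: T_def Y_def)
  have T_anti: "T \<Psi> \<subseteq> T \<Phi>" if "\<Phi> \<subseteq> \<Psi>" for \<Phi> \<Psi>
    using that by (auto simp: T_def)
  have "\<phi> ` T \<Phi> = (\<lambda>x. m (m (\<alpha> x) (\<gamma> x)) (\<beta> x)) ` {x \<in> A. i x \<notin> \<Phi>}" for \<Phi>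
    unfolding T_def image_image by (simp add: \<phi>_def)
  then have s': "s \<in> \<sigma> closure_of (\<phi> ` T \<Phi>)" if "finite \<Phi>" for \<Phi>
    using s[OF that] by (simp only:)
  obtain y where \<phi>y: "\<phi> y = s" and y: "\<And>\<Phi>. finite \<Phi> \<Longrightarrow> y \<in> Y closure_of (T \<Phi>)"
    using closure_point_lift_to_compact[where T = T and \<phi> = \<phi> and s = s,
        OF csY top_semigroup_Hausdorff[OF ts] cont_\<phi> T_top T_anti s'] by blast
  have image_closure: "g y \<in> \<sigma> closure_of (g ` T \<Phi>)" if "continuous_map Y \<sigma> g" "finite \<Phi>" for g \<Phi>
    using continuous_map_image_closure_subset[OF that(1)] y[OF that(2)] by blast
  show thesis
  proof (rule that[of "fst y" "fst (snd y)" "snd (snd y)"])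
    show "s = m (m (fst y) (fst (snd y))) (snd (snd y))"
      using \<phi>y by (simp add: \<phi>_def)
    show "fst y \<in> \<sigma> closure_of (\<alpha> ` A)"
      using image_closure[OF cont_fst, of "{}"] by (simp add: T_def image_image)
    show "snd (snd y) \<in> \<sigma> closure_of (\<beta> ` A)"
      using image_closure[OF cont_last, of "{}"] by (simp add: T_def image_image)
    show "fst (snd y) \<in> \<sigma> closure_of (\<gamma> ` {x \<in> A. i x \<notin> \<Phi>})" if "finite \<Phi>" for \<Phi>
      using image_closure[OF cont_mid that] by (simp add: T_def image_image)
  qed
qed

lemma escaping_point_eq_zero:
  fixes \<alpha> \<beta> :: "'x \<Rightarrow> 'a" and i :: "'x \<Rightarrow> 'i"
  assumes ts: "top_semigroup \<sigma> m" and cs: "compact_space \<sigma>"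
    and C: "closedin \<sigma> C" and z: "z \<in> topspace \<sigma>"
    and zero: "\<And>t. t \<in> C \<Longrightarrow> m t z = z \<and> m z t = z"
    and factors: "\<And>x. x \<in> A \<Longrightarrow> \<alpha> x \<in> C \<and> \<iota> (i x) \<in> topspace \<sigma> \<and> \<beta> x \<in> C"
    and idem: "\<And>x. x \<in> A \<Longrightarrow> m (\<iota> (i x)) (\<iota> (i x)) = \<iota> (i x)"
    and orth: "\<And>x y. x \<in> A \<Longrightarrow> y \<in> A \<Longrightarrow> i x \<noteq> i y \<Longrightarrow> m (\<iota> (i x)) (\<iota> (i y)) = z"
    and f: "\<And>x. x \<in> A \<Longrightarrow> f x = m (m (\<alpha> x) (\<iota> (i x))) (\<beta> x)"
    and escapes: "\<And>\<Phi>. finite \<Phi> \<Longrightarrow> s \<in> \<sigma> closure_of (f ` {x \<in> A. i x \<notin> \<Phi>})"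
  shows "s = z"
proof -
  have "f ` {x \<in> A. i x \<notin> \<Phi>} = (\<lambda>x. m (m (\<alpha> x) (\<iota> (i x))) (\<beta> x)) ` {x \<in> A. i x \<notin> \<Phi>}" for \<Phi>
    using f by (intro image_cong) simp_all
  then have s: "s \<in> \<sigma> closure_of ((\<lambda>x. m (m (\<alpha> x) (\<iota> (i x))) (\<beta> x)) ` {x \<in> A. i x \<notin> \<Phi>})"
    if "finite \<Phi>" for \<Phi>
    using escapes[OF that] by (simp only:)
  have top: "\<alpha> x \<in> topspace \<sigma> \<and> \<iota> (i x) \<in> topspace \<sigma> \<and> \<beta> x \<in> topspace \<sigma>" if "x \<in> A" for x
    using factors[OF that] closedin_subset[OF C] by blast
  obtain a c b where abc: "s = m (m a c) b"
    and a: "a \<in> \<sigma> closure_of (\<alpha> ` A)" and b: "b \<in> \<sigma> closure_of (\<beta> ` A)"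
    and c: "\<And>\<Phi>. finite \<Phi> \<Longrightarrow> c \<in> \<sigma> closure_of ((\<lambda>x. \<iota> (i x)) ` {x \<in> A. i x \<notin> \<Phi>})"
    using triple_product_cluster_point[where \<alpha> = \<alpha> and \<gamma> = "\<lambda>x. \<iota> (i x)" and \<beta> = \<beta> and i = i and s = s,
        OF ts cs top s] by blast
  have "c = z"
  proof (rule limit_of_orthogonal_idempotents[OF ts z, where J = "i ` A"])
    fix \<Phi> :: "'i set" assume "finite \<Phi>"
    moreover have "(\<lambda>x. \<iota> (i x)) ` {x \<in> A. i x \<notin> \<Phi>} \<subseteq> \<iota> ` (i ` A - \<Phi>)"
      by auto
    ultimately show "c \<in> \<sigma> closure_of (\<iota> ` (i ` A - \<Phi>))"
      using c closure_of_mono by blast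
  qed (use idem orth in auto)
  moreover have "a \<in> C" "b \<in> C"
    using a b closure_of_minimal[OF _ C, of "\<alpha> ` A"] closure_of_minimal[OF _ C, of "\<beta> ` A"] factors
    by blast+
  ultimately show ?thesis
    using abc zero by simp
qed

lemma closure_of_image_avoiding_finite:
  assumes "s \<in> X closure_of (f ` A)" and "\<And>j. s \<notin> X closure_of (f ` {x \<in> A. i x = j})"
  shows "finite \<Phi> \<Longrightarrow> s \<in> X closure_of (f ` {x \<in> A. i x \<notin> \<Phi>})"
proof (induction \<Phi> rule: finite_induct)
  case (insert j \<Phi>)
  have "f ` {x \<in> A. i x \<notin> \<Phi>} \<subseteq> f ` {x \<in> A. i x \<notin> insert j \<Phi>} \<union> f ` {x \<in> A. i x = j}"
    by auto
  then have "X closure_of (f ` {x \<in> A. i x \<notin> \<Phi>})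
      \<subseteq> X closure_of (f ` {x \<in> A. i x \<notin> insert j \<Phi>} \<union> f ` {x \<in> A. i x = j})"
    by (rule closure_of_mono)
  then have "X closure_of (f ` {x \<in> A. i x \<notin> \<Phi>})
      \<subseteq> X closure_of (f ` {x \<in> A. i x \<notin> insert j \<Phi>}) \<union> X closure_of (f ` {x \<in> A. i x = j})"
    by (simp only: closure_of_Un)
  then show ?case
    using insert.IH assms(2)[of j] by blast
qed (use assms(1) in simp)

lemma closure_point_in_fibre:
  fixes \<alpha> \<beta> :: "'x \<Rightarrow> 'a" and i :: "'x \<Rightarrow> 'i"
  assumes ts: "top_semigroup \<sigma> m" and cs: "compact_space \<sigma>"
    and C: "closedin \<sigma> C" and z: "z \<in> topspace \<sigma>"
    and zero: "\<And>t. t \<in> C \<Longrightarrow> m t z = z \<and> m z t = z"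
    and factors: "\<And>x. x \<in> A \<Longrightarrow> \<alpha> x \<in> C \<and> \<iota> (i x) \<in> topspace \<sigma> \<and> \<beta> x \<in> C"
    and idem: "\<And>x. x \<in> A \<Longrightarrow> m (\<iota> (i x)) (\<iota> (i x)) = \<iota> (i x)"
    and orth: "\<And>x y. x \<in> A \<Longrightarrow> y \<in> A \<Longrightarrow> i x \<noteq> i y \<Longrightarrow> m (\<iota> (i x)) (\<iota> (i y)) = z"
    and f: "\<And>x. x \<in> A \<Longrightarrow> f x = m (m (\<alpha> x) (\<iota> (i x))) (\<beta> x)"
    and s: "s \<in> \<sigma> closure_of (f ` A)" "s \<noteq> z"
  obtains j where "s \<in> \<sigma> closure_of (f ` {x \<in> A. i x = j})"
proof (rule ccontr)
  assume "\<not> thesis"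
  then have "\<And>j. s \<notin> \<sigma> closure_of (f ` {x \<in> A. i x = j})"
    using that by blast
  then have escapes: "\<And>\<Phi>. finite \<Phi> \<Longrightarrow> s \<in> \<sigma> closure_of (f ` {x \<in> A. i x \<notin> \<Phi>})"
    by (rule closure_of_image_avoiding_finite[OF s(1), of i])
  have "s = z"
    using escaping_point_eq_zero[OF ts cs C z zero factors idem orth f escapes] .
  with s(2) show False ..
qed

section \<open>Graph inverse semigroups\<close>

text \<open>The element \<open>u v\<^sup>-\<^sup>1\<close> acts on paths by \<open>v t \<mapsto> u t\<close>. This action is faithful and turns
  \<^const>\<open>gis_mult\<close> into composition of partial maps, which yields associativity.\<close>

definition gis_partial_map :: "('v,'e) gis \<Rightarrow> ('v,'e) path \<Rightarrow> ('v,'e) path option" where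
  "gis_partial_map x p = (case x of GZero \<Rightarrow> None
     | GElem u v \<Rightarrow> (if fst p = fst v \<and> (\<exists>t. snd p = snd v @ t)
                     then Some (fst u, snd u @ drop (length (snd v)) (snd p)) else None))"

lemma gis_partial_map_mult: "gis_partial_map (gis_mult x y) = gis_partial_map x \<circ>\<^sub>m gis_partial_map y"
proof (cases x)
  case GZero
  then show ?thesis
    by (auto simp: gis_partial_map_def map_comp_def fun_eq_iff split: option.split)
next
  case x: (GElem u v)
  show ?thesis
  proof (cases y)
    case GZero
    then show ?thesis
      by (auto simp: x gis_partial_map_def map_comp_def fun_eq_iff)
  next
    case y: (GElem w z)
    consider t where "fst w = fst v" "snd w = snd v @ t"
      | t where "\<not> (fst w = fst v \<and> (\<exists>t. snd w = snd v @ t))" "fst v = fst w" "snd v = snd w @ t"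
      | "\<not> (fst w = fst v \<and> (\<exists>t. snd w = snd v @ t))" "\<not> (fst v = fst w \<and> (\<exists>t. snd v = snd w @ t))"
      by blast
    then show ?thesis
    proof cases
      case 3
      then show ?thesis
        by (auto simp: x y gis_partial_map_def map_comp_def fun_eq_iff append_eq_append_conv2)
          (metis append_eq_append_conv2)+
    qed (auto simp: x y gis_partial_map_def map_comp_def fun_eq_iff)
  qed
qed

lemma gis_partial_map_inject:
  assumes "gis_partial_map x = gis_partial_map y"
  shows "x = y"
proof (cases x)
  case GZero
  then show ?thesis
    using assms by (cases y) (auto simp: gis_partial_map_def fun_eq_iff split: if_splits)
next
  case x: (GElem u v)
  have xv: "gis_partial_map x v = Some u"
    by (simp add: x gis_partial_map_def)
  then obtain u' v' where y: "y = GElem u' v'"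
    using assms by (cases y) (auto simp: gis_partial_map_def)
  have "gis_partial_map y v' = Some u'"
    by (simp add: y gis_partial_map_def)
  then have "gis_partial_map y v = Some u" "gis_partial_map x v' = Some u'"
    using assms xv by simp_all
  then obtain t t' where "fst v = fst v'" "snd v = snd v' @ t" "snd v' = snd v @ t'"
    by (auto simp: x y gis_partial_map_def split: if_splits)
  then have "v = v'"
    by (simp add: prod_eq_iff)
  then show ?thesis
    using \<open>gis_partial_map y v = Some u\<close> by (simp add: x y gis_partial_map_def prod_eq_iff)
qed

lemma gis_mult_assoc: "gis_mult (gis_mult x y) z = gis_mult x (gis_mult y z)"
  by (rule gis_partial_map_inject)
    (simp add: gis_partial_map_mult map_comp_def fun_eq_iff split: option.split)

lemma gis_mult_GZero_right [simp]: "gis_mult x GZero = GZero"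
  by (cases x) simp_all

lemma path_range_append: "path_range r (a, l @ t) = path_range r (path_range r (a, l), t)"
  by (cases "t = []") (auto simp: path_range_def)

lemma path_range_in_vertices:
  assumes "r ` Ed \<subseteq> V" "is_path V Ed s r p"
  shows "path_range r p \<in> V"
  using assms last_in_set by (fastforce simp: path_range_def is_path_def)

lemma is_path_iff_successively:
  "is_path V Ed s r (a, es) \<longleftrightarrow>
     a \<in> V \<and> set es \<subseteq> Ed \<and> (es \<noteq> [] \<longrightarrow> s (hd es) = a) \<and> successively (\<lambda>e f. r e = s f) es"
  by (simp add: is_path_def successively_conv_nth)

lemma is_path_append_iff:
  assumes "r ` Ed \<subseteq> V"
  shows "is_path V Ed s r (a, l @ t) \<longleftrightarrow>
    is_path V Ed s r (a, l) \<and> is_path V Ed s r (path_range r (a, l), t)"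
proof (cases "l = []")
  case False
  have "set l \<subseteq> Ed \<Longrightarrow> r (last l) \<in> V"
    using False assms last_in_set by blast
  then show ?thesis
    using False
    by (cases "t = []") (auto simp: is_path_iff_successively successively_append_iff path_range_def)
qed (auto simp: is_path_iff_successively path_range_def)

lemma GZero_in_gis_carrier [simp]: "GZero \<in> gis_carrier V Ed s r"
  by (simp add: gis_carrier_def)

lemma GElem_in_gis_carrier_iff [simp]:
  "GElem u v \<in> gis_carrier V Ed s r \<longleftrightarrow>
     is_path V Ed s r u \<and> is_path V Ed s r v \<and> path_range r u = path_range r v"
  unfolding gis_carrier_def by blast

lemma gis_mult_closed:
  assumes E: "r ` Ed \<subseteq> V" and x: "x \<in> gis_carrier V Ed s r" and y: "y \<in> gis_carrier V Ed s r"
  shows "gis_mult x y \<in> gis_carrier V Ed s r"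
proof (cases x; cases y)
  fix u v w z assume xy: "x = GElem u v" "y = GElem w z"
  obtain a us b vs c ws d zs where uvwz: "u = (a, us)" "v = (b, vs)" "w = (c, ws)" "z = (d, zs)"
    by (cases u; cases v; cases w; cases z)
  have paths: "is_path V Ed s r (a, us)" "is_path V Ed s r (b, vs)" "is_path V Ed s r (c, ws)"
    "is_path V Ed s r (d, zs)"
    and ranges: "path_range r (a, us) = path_range r (b, vs)"
      "path_range r (c, ws) = path_range r (d, zs)"
    using x y by (simp_all add: xy uvwz)
  consider (extend_right) t where "c = b" "ws = vs @ t"
    | (extend_left) t where "\<not> (c = b \<and> (\<exists>t. ws = vs @ t))" "b = c" "vs = ws @ t"
    | (zero) "\<not> (c = b \<and> (\<exists>t. ws = vs @ t))" "\<not> (b = c \<and> (\<exists>t. vs = ws @ t))"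
    by blast
  then show ?thesis
  proof cases
    case extend_right
    then have "is_path V Ed s r (path_range r (a, us), t)"
      using paths(3) ranges(1) is_path_append_iff[OF E] by simp
    then show ?thesis
      using extend_right paths ranges is_path_append_iff[OF E]
      by (simp add: xy uvwz path_range_append[of r a us] path_range_append[of r b vs])
  next
    case extend_left
    then have "is_path V Ed s r (path_range r (d, zs), t)"
      using paths(2) ranges(2) is_path_append_iff[OF E] by simp
    then show ?thesis
      using extend_left paths ranges is_path_append_iff[OF E]
      by (simp add: xy uvwz path_range_append[of r d zs] path_range_append[of r c ws])
  qed (use xy uvwz in auto)
qed (simp_all add: x y)

lemma top_semigroup_gis:
  assumes "r ` Ed \<subseteq> V" and "topspace \<tau> = gis_carrier V Ed s r" and "Hausdorff_space \<tau>"
    and "continuous_map (prod_topology \<tau> \<tau>) \<tau> (\<lambda>(x, y). gis_mult x y)"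
  shows "top_semigroup \<tau> gis_mult"
  using assms gis_mult_closed[OF assms(1)] by (simp add: top_semigroup_def gis_mult_assoc)

definition acyclic_graph :: "'v set \<Rightarrow> 'e set \<Rightarrow> ('e \<Rightarrow> 'v) \<Rightarrow> ('e \<Rightarrow> 'v) \<Rightarrow> bool" where
  "acyclic_graph V Ed s r \<longleftrightarrow> (\<forall>w c. is_path V Ed s r (w, c) \<and> path_range r (w, c) = w \<longrightarrow> c = [])"

lemma acyclic_graph_path_range_append:
  assumes E: "r ` Ed \<subseteq> V" and "acyclic_graph V Ed s r"
    and "is_path V Ed s r (a, l @ t)" and "path_range r (a, l @ t) = path_range r (a, l)"
  shows "t = []"
  using assms is_path_append_iff[OF E] path_range_append[of r a l t]
  unfolding acyclic_graph_def by metis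

lemma gis_idempotents_orthogonal:
  assumes E: "r ` Ed \<subseteq> V" and acyclic: "acyclic_graph V Ed s r"
    and u: "is_path V Ed s r u" and u': "is_path V Ed s r u'"
    and range: "path_range r u = path_range r u'" and "u \<noteq> u'"
  shows "gis_mult (GElem u u) (GElem u' u') = GZero"
proof -
  obtain a l a' l' where uu': "u = (a, l)" "u' = (a', l')"
    by (cases u; cases u')
  have "\<not> (a' = a \<and> (\<exists>t. l' = l @ t))" "\<not> (a = a' \<and> (\<exists>t. l = l' @ t))"
    using acyclic_graph_path_range_append[OF E acyclic] u u' range \<open>u \<noteq> u'\<close>
    by (auto simp: uu')
  then show ?thesis
    by (simp add: uu')
qed

section \<open>Graph inverse semigroups inside compact semigroups\<close>

locale gis_in_compact_semigroup =
  fixes V :: "'v set" and Ed :: "'e set" and s r :: "'e \<Rightarrow> 'v"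
    and \<sigma> :: "'b topology" and m :: "'b \<Rightarrow> 'b \<Rightarrow> 'b" and h :: "('v, 'e) gis \<Rightarrow> 'b"
  assumes range_in_vertices: "r ` Ed \<subseteq> V"
    and semigroup: "top_semigroup \<sigma> m" and compact: "compact_space \<sigma>"
    and inj: "inj_on h (gis_carrier V Ed s r)"
    and maps_to: "h ` gis_carrier V Ed s r \<subseteq> topspace \<sigma>"
    and hom: "\<And>x y. x \<in> gis_carrier V Ed s r \<Longrightarrow> y \<in> gis_carrier V Ed s r \<Longrightarrow>
                h (gis_mult x y) = m (h x) (h y)"
begin

abbreviation G :: "('v, 'e) gis set" where
  "G \<equiv> gis_carrier V Ed s r"

lemma h_GZero: "h GZero \<in> topspace \<sigma>"
  using maps_to GZero_in_gis_carrier by blast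

abbreviation h_elem :: "('v, 'e) path \<times> ('v, 'e) path \<Rightarrow> 'b" where
  "h_elem q \<equiv> h (GElem (fst q) (snd q))"

lemma acyclic: "acyclic_graph V Ed s r"
  unfolding acyclic_graph_def
proof (intro allI impI)
  fix w c assume cycle: "is_path V Ed s r (w, c) \<and> path_range r (w, c) = w"
  then have w: "is_path V Ed s r (w, [])"
    by (simp add: is_path_def)
  define e a b where "e = GElem (w, []) (w, [] :: 'e list)"
    and "a = GElem (w, []) (w, c)" and "b = GElem (w, c) (w, [])"
  have in_G: "e \<in> G" "a \<in> G" "b \<in> G"
    using w cycle by (simp_all add: e_def a_def b_def path_range_def)
  have "gis_mult a e = a" "gis_mult e b = b" "gis_mult a b = e"
    by (simp_all add: e_def a_def b_def)
  then have "m (h a) (h e) = h a" "m (h e) (h b) = h b" "m (h a) (h b) = h e"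
    using in_G by (simp_all add: hom[symmetric])
  moreover have "h a \<in> topspace \<sigma>" "h b \<in> topspace \<sigma>" "h e \<in> topspace \<sigma>"
    using in_G maps_to by blast+
  ultimately have "m (h b) (h a) = h e"
    using compact_top_semigroup_no_bicyclic[OF semigroup compact] by blast
  then have "h (gis_mult b a) = h e"
    using in_G by (simp add: hom)
  moreover have "gis_mult b a \<in> G"
    using in_G gis_mult_closed[OF range_in_vertices] by blast
  ultimately have "gis_mult b a = e"
    using inj in_G by (simp add: inj_on_eq_iff)
  then show "c = []"
    by (simp add: e_def a_def b_def)
qed

lemma GZero_absorbs_closure:
  assumes "t \<in> \<sigma> closure_of (h ` G)"
  shows "m t (h GZero) = h GZero \<and> m (h GZero) t = h GZero"
proof -
  note H = top_semigroup_Hausdorff[OF semigroup]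
  note z = h_GZero
  have "m t (h GZero) = h GZero"
    by (rule forall_in_closure_of_eq[OF assms H continuous_map_top_semigroup_right[OF semigroup z]])
      (use z in \<open>auto simp: hom[OF _ GZero_in_gis_carrier, symmetric]\<close>)
  moreover have "m (h GZero) t = h GZero"
    by (rule forall_in_closure_of_eq[OF assms H continuous_map_top_semigroup_left[OF semigroup z]])
      (use z in \<open>auto simp: hom[OF GZero_in_gis_carrier, symmetric]\<close>)
  ultimately show ?thesis ..
qed

text \<open>Each step below isolates one coordinate of a closure point, via a factorisation
  \<open>x = \<alpha> x \<cdot> \<iota> (i x) \<cdot> \<beta> x\<close> through pairwise orthogonal idempotents.\<close>

lemma closure_point_in_gis_fibre:
  assumes p: "p \<in> \<sigma> closure_of (h_elem ` Q)" "p \<noteq> h GZero"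
    and factors: "\<And>q. q \<in> Q \<Longrightarrow> \<alpha> q \<in> G \<and> \<iota> (i q) \<in> G \<and> \<beta> q \<in> G"
    and idem: "\<And>q. q \<in> Q \<Longrightarrow> gis_mult (\<iota> (i q)) (\<iota> (i q)) = \<iota> (i q)"
    and orth: "\<And>q q'. q \<in> Q \<Longrightarrow> q' \<in> Q \<Longrightarrow> i q \<noteq> i q' \<Longrightarrow> gis_mult (\<iota> (i q)) (\<iota> (i q')) = GZero"
    and factorisation: "\<And>q. q \<in> Q \<Longrightarrow> gis_mult (gis_mult (\<alpha> q) (\<iota> (i q))) (\<beta> q) = GElem (fst q) (snd q)"
  obtains j where "p \<in> \<sigma> closure_of (h_elem ` {q \<in> Q. i q = j})"
proof -
  have C: "h x \<in> \<sigma> closure_of (h ` G)" if "x \<in> G" for x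
    using that maps_to by (intro closure_of_subset[THEN subsetD]) auto
  have factors': "h (\<alpha> q) \<in> \<sigma> closure_of (h ` G) \<and> h (\<iota> (i q)) \<in> topspace \<sigma>
      \<and> h (\<beta> q) \<in> \<sigma> closure_of (h ` G)"
    if "q \<in> Q" for q
    using factors[OF that] C maps_to by blast
  have idem': "m (h (\<iota> (i q))) (h (\<iota> (i q))) = h (\<iota> (i q))" if "q \<in> Q" for q
    using factors[OF that] idem[OF that] by (simp add: hom[symmetric])
  have orth': "m (h (\<iota> (i q))) (h (\<iota> (i q'))) = h GZero" if "q \<in> Q" "q' \<in> Q" "i q \<noteq> i q'" for q q'
    using factors[OF that(1)] factors[OF that(2)] orth[OF that] by (simp add: hom[symmetric])
  have factorisation': "h_elem q = m (m (h (\<alpha> q)) (h (\<iota> (i q)))) (h (\<beta> q))" if "q \<in> Q" for q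
    using factors[OF that] factorisation[OF that] gis_mult_closed[OF range_in_vertices]
    by (simp add: hom[symmetric])
  show thesis
    using closure_point_in_fibre[where \<alpha> = "\<lambda>q. h (\<alpha> q)" and \<beta> = "\<lambda>q. h (\<beta> q)" and \<iota> = "\<lambda>j. h (\<iota> j)"
        and i = i and f = h_elem, OF semigroup compact closedin_closure_of h_GZero GZero_absorbs_closure
        factors' idem' orth' factorisation' p] that
    by blast
qed

lemma closure_point_range_fibre:
  assumes p: "p \<in> \<sigma> closure_of (h_elem ` Q)" "p \<noteq> h GZero"
    and Q: "\<And>q. q \<in> Q \<Longrightarrow> GElem (fst q) (snd q) \<in> G"
  obtains w where "p \<in> \<sigma> closure_of (h_elem ` {q \<in> Q. path_range r (fst q) = w})"
proof -
  let ?vertex = "\<lambda>w. GElem (w, []) (w, [])"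
  have factors: "GElem (fst q) (path_range r (fst q), []) \<in> G \<and> ?vertex (path_range r (fst q)) \<in> G
      \<and> GElem (path_range r (fst q), []) (snd q) \<in> G" if "q \<in> Q" for q
    using Q[OF that] path_range_in_vertices[OF range_in_vertices, of s "fst q"]
    by (simp add: is_path_def path_range_def)
  have factorisation: "gis_mult (gis_mult (GElem (fst q) (path_range r (fst q), []))
      (?vertex (path_range r (fst q))))
      (GElem (path_range r (fst q), []) (snd q)) = GElem (fst q) (snd q)" for q
    by simp
  show thesis
    using closure_point_in_gis_fibre[where i = "\<lambda>q. path_range r (fst q)" and \<iota> = ?vertex
        and \<alpha> = "\<lambda>q. GElem (fst q) (path_range r (fst q), [])"
        and \<beta> = "\<lambda>q. GElem (path_range r (fst q), []) (snd q)", OF p factors _ _ factorisation] that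
    by auto
qed

lemma closure_point_left_fibre:
  assumes p: "p \<in> \<sigma> closure_of (h_elem ` Q)" "p \<noteq> h GZero"
    and Q: "\<And>q. q \<in> Q \<Longrightarrow> GElem (fst q) (snd q) \<in> G \<and> path_range r (fst q) = w"
  obtains u where "p \<in> \<sigma> closure_of (h_elem ` {q \<in> Q. fst q = u})"
proof -
  have factors: "GElem (fst q) (fst q) \<in> G \<and> GElem (fst q) (fst q) \<in> G \<and> GElem (fst q) (snd q) \<in> G"
    if "q \<in> Q" for q
    using Q[OF that] by simp
  have orth: "gis_mult (GElem (fst q) (fst q)) (GElem (fst q') (fst q')) = GZero"
    if "q \<in> Q" "q' \<in> Q" "fst q \<noteq> fst q'" for q q'
    by (rule gis_idempotents_orthogonal[OF range_in_vertices acyclic])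
      (use Q[OF that(1)] Q[OF that(2)] that(3) in auto)
  have factorisation:
    "gis_mult (gis_mult (GElem (fst q) (fst q)) (GElem (fst q) (fst q))) (GElem (fst q) (snd q))
      = GElem (fst q) (snd q)" for q
    by simp
  show thesis
    using closure_point_in_gis_fibre[where i = fst and \<iota> = "\<lambda>u. GElem u u"
        and \<alpha> = "\<lambda>q. GElem (fst q) (fst q)" and \<beta> = "\<lambda>q. GElem (fst q) (snd q)",
        OF p factors _ orth factorisation] that
    by auto
qed

lemma closure_point_right_fibre:
  assumes p: "p \<in> \<sigma> closure_of (h_elem ` Q)" "p \<noteq> h GZero"
    and Q: "\<And>q. q \<in> Q \<Longrightarrow> GElem (fst q) (snd q) \<in> G \<and> path_range r (snd q) = w"
  obtains v where "p \<in> \<sigma> closure_of (h_elem ` {q \<in> Q. snd q = v})"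
proof -
  have factors: "GElem (fst q) (snd q) \<in> G \<and> GElem (snd q) (snd q) \<in> G \<and> GElem (snd q) (snd q) \<in> G"
    if "q \<in> Q" for q
    using Q[OF that] by simp
  have orth: "gis_mult (GElem (snd q) (snd q)) (GElem (snd q') (snd q')) = GZero"
    if "q \<in> Q" "q' \<in> Q" "snd q \<noteq> snd q'" for q q'
    by (rule gis_idempotents_orthogonal[OF range_in_vertices acyclic])
      (use Q[OF that(1)] Q[OF that(2)] that(3) in auto)
  have factorisation:
    "gis_mult (gis_mult (GElem (fst q) (snd q)) (GElem (snd q) (snd q))) (GElem (snd q) (snd q))
      = GElem (fst q) (snd q)" for q
    by simp
  show thesis
    using closure_point_in_gis_fibre[where i = snd and \<iota> = "\<lambda>v. GElem v v"
        and \<alpha> = "\<lambda>q. GElem (fst q) (snd q)" and \<beta> = "\<lambda>q. GElem (snd q) (snd q)",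
        OF p factors _ orth factorisation] that
    by auto
qed

lemma closure_of_image_nonzero:
  assumes p: "p \<in> \<sigma> closure_of (h ` G)" "p \<noteq> h GZero"
  shows "p \<in> \<sigma> closure_of (h_elem ` {q. GElem (fst q) (snd q) \<in> G})"
proof -
  have "h ` G = h_elem ` {q. GElem (fst q) (snd q) \<in> G} \<union> {h GZero}"
  proof
    show "h ` G \<subseteq> h_elem ` {q. GElem (fst q) (snd q) \<in> G} \<union> {h GZero}"
    proof (rule image_subsetI)
      fix x assume "x \<in> G"
      then show "h x \<in> h_elem ` {q. GElem (fst q) (snd q) \<in> G} \<union> {h GZero}"
        by (cases x) (auto simp: image_iff)
    qed
  qed auto
  then have "\<sigma> closure_of (h ` G)
      = \<sigma> closure_of (h_elem ` {q. GElem (fst q) (snd q) \<in> G}) \<union> \<sigma> closure_of {h GZero}"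
    by (simp only: closure_of_Un)
  also have "\<sigma> closure_of {h GZero} = {h GZero}"
    using closure_of_singleton[OF Hausdorff_imp_t1_space[OF top_semigroup_Hausdorff[OF semigroup]]] h_GZero
    by simp
  finally show ?thesis
    using p by blast
qed

lemma closedin_image: "closedin \<sigma> (h ` G)"
proof -
  have "p \<in> h ` G" if p: "p \<in> \<sigma> closure_of (h ` G)" for p
  proof (rule ccontr)
    assume p_out: "p \<notin> h ` G"
    then have pz: "p \<noteq> h GZero"
      by force
    define P where "P = {q. GElem (fst q) (snd q) \<in> G}"
    have P: "\<And>q. q \<in> P \<Longrightarrow> GElem (fst q) (snd q) \<in> G"
      by (simp add: P_def)
    obtain w where p1: "p \<in> \<sigma> closure_of (h_elem ` {q \<in> P. path_range r (fst q) = w})"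
      using closure_point_range_fibre[OF closure_of_image_nonzero[OF p pz, folded P_def] pz P] by blast
    have P1: "\<And>q. q \<in> {q \<in> P. path_range r (fst q) = w} \<Longrightarrow>
        GElem (fst q) (snd q) \<in> G \<and> path_range r (fst q) = w"
      by (auto simp: P_def)
    obtain u where p2: "p \<in> \<sigma> closure_of (h_elem ` {q \<in> {q \<in> P. path_range r (fst q) = w}. fst q = u})"
      using closure_point_left_fibre[OF p1 pz P1] by blast
    have P2: "\<And>q. q \<in> {q \<in> {q \<in> P. path_range r (fst q) = w}. fst q = u} \<Longrightarrow>
        GElem (fst q) (snd q) \<in> G \<and> path_range r (snd q) = w"
      by (auto simp: P_def)
    obtain v where p3: "p \<in> \<sigma> closure_of
        (h_elem ` {q \<in> {q \<in> {q \<in> P. path_range r (fst q) = w}. fst q = u}. snd q = v})"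
      using closure_point_right_fibre[OF p2 pz P2] by blast
    have "h_elem ` {q \<in> {q \<in> {q \<in> P. path_range r (fst q) = w}. fst q = u}. snd q = v}
        \<subseteq> h ` (G \<inter> {GElem u v})"
      by (auto simp: P_def)
    then have "p \<in> \<sigma> closure_of (h ` (G \<inter> {GElem u v}))"
      using p3 closure_of_mono by blast
    moreover have "\<sigma> closure_of (h ` (G \<inter> {GElem u v})) \<subseteq> h ` G"
      using closure_of_singleton[OF Hausdorff_imp_t1_space[OF top_semigroup_Hausdorff[OF semigroup]]]
      by (cases "GElem u v \<in> G") auto
    ultimately show False
      using p_out by blast
  qed
  then show ?thesis
    using maps_to closure_of_subset_eq by blast
qed

end

lemma compact_space_if_closed_embedding:
  assumes "embedding_map X Y f" "compact_space Y" "closedin Y (f ` topspace X)"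
  shows "compact_space X"
proof -
  have "compact_space (subtopology Y (f ` topspace X))"
    using assms(2,3) by (simp add: closedin_compact_space compact_space_subtopology)
  then show ?thesis
    using homeomorphic_compact_space[OF embedding_map_imp_homeomorphic_space[OF assms(1)]] by simp
qed

lemma compact_space_if_gis_embeds_in_compact:
  assumes E: "r ` Ed \<subseteq> V" and carrier: "topspace \<tau> = gis_carrier V Ed s r"
    and "embeds_in_compact_top_semigroup \<tau> gis_mult \<sigma> m h"
  shows "compact_space \<tau>"
proof -
  have emb: "embedding_map \<tau> \<sigma> h" and S: "top_semigroup \<sigma> m" "compact_space \<sigma>"
    and hom: "\<And>x y. x \<in> topspace \<tau> \<Longrightarrow> y \<in> topspace \<tau> \<Longrightarrow> h (gis_mult x y) = m (h x) (h y)"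
    using assms(3) by (auto simp: embeds_in_compact_top_semigroup_def)
  have hm: "homeomorphic_map \<tau> (subtopology \<sigma> (h ` topspace \<tau>)) h"
    using emb by (simp add: embedding_map_def)
  interpret gis_in_compact_semigroup V Ed s r \<sigma> m h
  proof
    show "inj_on h (gis_carrier V Ed s r)"
      using homeomorphic_imp_injective_map[OF hm] by (simp add: carrier)
    show "h ` gis_carrier V Ed s r \<subseteq> topspace \<sigma>"
      using homeomorphic_imp_surjective_map[OF hm]
      unfolding topspace_subtopology carrier[symmetric] by blast
  qed (use E S hom in \<open>simp_all add: carrier\<close>)
  show ?thesis
    using compact_space_if_closed_embedding[OF emb S(2)] closedin_image by (simp add: carrier)
qed

lemma embeds_in_compact_top_semigroup_self:
  "top_semigroup \<tau> mul \<Longrightarrow> compact_space \<tau> \<Longrightarrow> embeds_in_compact_top_semigroup \<tau> mul \<tau> mul id"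
  by (simp add: embeds_in_compact_top_semigroup_def embedding_map_def)

theorem corollary5p1:
  fixes V :: "'v set" and Ed :: "'e set" and s r :: "'e \<Rightarrow> 'v"
    and \<tau> :: "('v,'e) gis topology"
  assumes graph: "s ` Ed \<subseteq> V" "r ` Ed \<subseteq> V"
    and carrier: "topspace \<tau> = gis_carrier V Ed s r"
    and hausdorff: "Hausdorff_space \<tau>"
    and cont: "continuous_map (prod_topology \<tau> \<tau>) \<tau> (\<lambda>(x,y). gis_mult x y)"
  shows "((\<exists>(\<sigma> :: 'b topology) m h. embeds_in_compact_top_semigroup \<tau> gis_mult \<sigma> m h)
            \<longrightarrow> compact_space \<tau>)
       \<and> (compact_space \<tau> \<longrightarrow>
            (\<exists>(\<sigma> :: ('v,'e) gis topology) m h. embeds_in_compact_top_semigroup \<tau> gis_mult \<sigma> m h))"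
  using compact_space_if_gis_embeds_in_compact[OF graph(2) carrier]
    embeds_in_compact_top_semigroup_self[OF top_semigroup_gis[OF graph(2) carrier hausdorff cont]]
  by blast

end
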